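(* Let $t\subset\mathbb{R}^3$ be a tetrahedron with vertices numbered $0,1,2,3$ and let $p\geq0$ be an integer. For $i=0,\dots,3$: - $\lambda_i$ is the $i$-th barycentric coordinate; - $\bm{\nu}_i$ is the unit normal of the face opposite vertex $i$; - $j,l,m$ denote the three indices in $\{0,1,2,3\}\setminus\{i\}$. Define $$\Sigma^c_{t,p}:=\sum_{i=0}^3\mathcal{P}_{p-3}(t)\,\lambda_j\lambda_l\lambda_m\,\bm{\nu}_i .$$ Then $$\Sigma^c_{t,p}=\mathring{\mathcal{P}}_p\Lambda^1(t):=\{\bm{E}\in(\mathcal{P}_p(t))^3:\ \bm{E}\times\bm{\nu}=0 \text{ on }\partial t\},$$ the space of degree-$p$ polynomial vector fields with vanishing tangential components on the boundary of $t$.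
   Context: $\mathcal{P}_r(t)$ denotes polynomials of degree at most $r$ on $t$, with $\mathcal{P}_r=\{0\}$ for $r<0$. $\bm{\nu}$ denotes the unit outward normal on $\partial t$. *)

theory Defs
  imports "HOL-Analysis.Analysis"
begin

text \<open>Polynomial functions on R^3 of total degree at most r (r an integer; for r < 0
  the index set is empty, so the only such function is 0).\<close>
definition poly3 :: "int \<Rightarrow> (real^3 \<Rightarrow> real) \<Rightarrow> bool" where
  "poly3 r f \<longleftrightarrow> (\<exists>c :: nat \<times> nat \<times> nat \<Rightarrow> real.
     f = (\<lambda>x. \<Sum>(a,b,d)\<in>{(a,b,d). int (a + b + d) \<le> r}.
                 c (a,b,d) * (x$1)^a * (x$2)^b * (x$3)^d))"

definition vpoly3 :: "int \<Rightarrow> (real^3 \<Rightarrow> real^3) \<Rightarrow> bool" where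
  "vpoly3 r E \<longleftrightarrow> (\<forall>k. poly3 r (\<lambda>x. E x $ k))"

definition tetrahedron :: "(nat \<Rightarrow> real^3) \<Rightarrow> bool" where
  "tetrahedron v \<longleftrightarrow> inj_on v {..<4} \<and> \<not> affine_dependent (v ` {..<4})"

definition bary :: "(nat \<Rightarrow> real^3) \<Rightarrow> nat \<Rightarrow> real^3 \<Rightarrow> real" where
  "bary v i x = (THE l :: nat \<Rightarrow> real. (\<forall>k\<ge>4. l k = 0) \<and> (\<Sum>k<4. l k) = 1
                      \<and> (\<Sum>k<4. l k *\<^sub>R v k) = x) i"

definition face :: "(nat \<Rightarrow> real^3) \<Rightarrow> nat \<Rightarrow> (real^3) set" where
  "face v i = convex hull (v ` ({..<4} - {i}))"

text \<open>Unit outward normal of the face opposite vertex i.\<close>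
definition face_normal :: "(nat \<Rightarrow> real^3) \<Rightarrow> nat \<Rightarrow> real^3" where
  "face_normal v i = (THE n. norm n = 1
       \<and> (\<forall>j k. j < 4 \<and> k < 4 \<and> j \<noteq> i \<and> k \<noteq> i \<longrightarrow> n \<bullet> (v j - v k) = 0)
       \<and> n \<bullet> (v i - v (if i = 0 then 1 else 0)) < 0)"

definition Sigma_c :: "(nat \<Rightarrow> real^3) \<Rightarrow> nat \<Rightarrow> (real^3 \<Rightarrow> real^3) set" where
  "Sigma_c v p = {E. \<exists>q :: nat \<Rightarrow> real^3 \<Rightarrow> real. (\<forall>i<4. poly3 (int p - 3) (q i)) \<and>
      E = (\<lambda>x. \<Sum>i<4. (q i x * (\<Prod>k\<in>{..<4} - {i}. bary v k x)) *\<^sub>R face_normal v i)}"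

definition P_ring_Lambda1 :: "(nat \<Rightarrow> real^3) \<Rightarrow> nat \<Rightarrow> (real^3 \<Rightarrow> real^3) set" where
  "P_ring_Lambda1 v p = {E. vpoly3 (int p) E \<and>
      (\<forall>i<4. \<forall>x\<in>face v i. cross3 (E x) (face_normal v i) = 0)}"

end

theory Submission
  imports Defs "HOL-Computational_Algebra.Polynomial"
begin

text \<open>Every field of \<open>\<Sigma>\<^sup>c\<close> is a multiple of \<open>\<nu>\<^sub>i\<close> on face \<open>i\<close>, since all other
  summands contain the factor \<open>\<lambda>\<^sub>i\<close>. Conversely, a field \<open>E\<close> with vanishing tangential trace is
  normal to two non-parallel faces on every edge, hence vanishes on the edges. So on face \<open>i\<close>
  the normal component \<open>E \<bullet> \<nu>\<^sub>i\<close> is divisible by \<open>\<lambda>\<^sub>j \<lambda>\<^sub>l \<lambda>\<^sub>m\<close>, giving \<open>q\<^sub>i\<close> of degree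
  \<open>p - 3\<close>. What remains after subtracting \<open>\<Sum>\<^sub>i q\<^sub>i \<lambda>\<^sub>j \<lambda>\<^sub>l \<lambda>\<^sub>m \<nu>\<^sub>i\<close> vanishes on the whole
  boundary, so it is \<open>\<lambda>\<^sub>0 \<lambda>\<^sub>1 \<lambda>\<^sub>2 \<lambda>\<^sub>3 G\<close>; writing \<open>G\<close> in the basis \<open>\<nu>\<^sub>1, \<nu>\<^sub>2, \<nu>\<^sub>3\<close> absorbs it into
  the \<open>q\<^sub>i\<close>. Each division step is, in an affine chart, the fact that a polynomial vanishing on
  an open piece of the plane \<open>z\<^sub>1 = 0\<close> is divisible by \<open>z\<^sub>1\<close>.\<close>

section \<open>Polynomials in three variables\<close>

definition monomial3 :: "nat \<times> nat \<times> nat \<Rightarrow> real^3 \<Rightarrow> real" where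
  "monomial3 \<alpha> x = (case \<alpha> of (a, b, d) \<Rightarrow> (x$1)^a * (x$2)^b * (x$3)^d)"

definition exponents_upto :: "int \<Rightarrow> (nat \<times> nat \<times> nat) set" where
  "exponents_upto r = {(a, b, d). int (a + b + d) \<le> r}"

lemma finite_exponents_upto: "finite (exponents_upto r)"
proof (rule finite_subset)
  show "exponents_upto r \<subseteq> {..nat r} \<times> {..nat r} \<times> {..nat r}"
    by (auto simp: exponents_upto_def)
qed auto

lemma poly3_iff_monomial_sum:
  "poly3 r f \<longleftrightarrow> (\<exists>c. f = (\<lambda>x. \<Sum>\<alpha>\<in>exponents_upto r. c \<alpha> * monomial3 \<alpha> x))"
proof -
  have "(\<Sum>(a,b,d)\<in>exponents_upto r. c (a,b,d) * (x$1)^a * (x$2)^b * (x$3)^d)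
      = (\<Sum>\<alpha>\<in>exponents_upto r. c \<alpha> * monomial3 \<alpha> x)" for c x
    by (rule sum.cong) (auto simp: monomial3_def)
  then show ?thesis
    unfolding poly3_def exponents_upto_def[symmetric] by simp
qed

lemma poly3E:
  assumes "poly3 r f"
  obtains c where "\<And>x. f x = (\<Sum>\<alpha>\<in>exponents_upto r. c \<alpha> * monomial3 \<alpha> x)"
  using assms unfolding poly3_iff_monomial_sum by auto

lemma poly3_monomial_sum:
  assumes "finite I" "\<And>i. i \<in> I \<Longrightarrow> \<kappa> i \<in> exponents_upto r"
  shows "poly3 r (\<lambda>x. \<Sum>i\<in>I. w i * monomial3 (\<kappa> i) x)"
proof -
  define c where "c \<alpha> = (\<Sum>i\<in>{i\<in>I. \<kappa> i = \<alpha>}. w i)" for \<alpha>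
  have "(\<Sum>\<alpha>\<in>exponents_upto r. c \<alpha> * monomial3 \<alpha> x) = (\<Sum>i\<in>I. w i * monomial3 (\<kappa> i) x)" for x
  proof -
    have "(\<Sum>\<alpha>\<in>exponents_upto r. c \<alpha> * monomial3 \<alpha> x)
        = (\<Sum>\<alpha>\<in>exponents_upto r. \<Sum>i\<in>{i\<in>I. \<kappa> i = \<alpha>}. w i * monomial3 (\<kappa> i) x)"
      unfolding c_def sum_distrib_right by (rule sum.cong) auto
    also have "\<dots> = (\<Sum>i\<in>I. w i * monomial3 (\<kappa> i) x)"
      by (rule sum.group) (use assms finite_exponents_upto in auto)
    finally show ?thesis .
  qed
  then show ?thesis
    unfolding poly3_iff_monomial_sum by metis
qed

lemma poly3_zero: "poly3 r (\<lambda>x. 0)"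
  using poly3_monomial_sum[of "{}"] by simp

lemma poly3_add:
  assumes "poly3 r f" "poly3 r g"
  shows "poly3 r (\<lambda>x. f x + g x)"
proof -
  obtain c d where c: "\<And>x. f x = (\<Sum>\<alpha>\<in>exponents_upto r. c \<alpha> * monomial3 \<alpha> x)"
    and d: "\<And>x. g x = (\<Sum>\<alpha>\<in>exponents_upto r. d \<alpha> * monomial3 \<alpha> x)"
    using poly3E[OF assms(1)] poly3E[OF assms(2)] by metis
  show ?thesis
    unfolding poly3_iff_monomial_sum
    by (rule exI[of _ "\<lambda>\<alpha>. c \<alpha> + d \<alpha>"]) (simp add: c d sum.distrib distrib_right)
qed

lemma poly3_cmult:
  assumes "poly3 r f"
  shows "poly3 r (\<lambda>x. a * f x)"
proof -
  obtain c where c: "\<And>x. f x = (\<Sum>\<alpha>\<in>exponents_upto r. c \<alpha> * monomial3 \<alpha> x)"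
    using poly3E[OF assms] by blast
  show ?thesis
    unfolding poly3_iff_monomial_sum
    by (rule exI[of _ "\<lambda>\<alpha>. a * c \<alpha>"]) (simp add: c sum_distrib_left mult.assoc)
qed

lemma poly3_diff:
  assumes "poly3 r f" "poly3 r g"
  shows "poly3 r (\<lambda>x. f x - g x)"
  using poly3_add[OF assms(1) poly3_cmult[OF assms(2), of "-1"]] by simp

lemma poly3_sum:
  assumes "finite A" "\<And>i. i \<in> A \<Longrightarrow> poly3 r (f i)"
  shows "poly3 r (\<lambda>x. \<Sum>i\<in>A. f i x)"
  using assms by (induction A rule: finite_induct) (auto intro: poly3_zero poly3_add)

lemma poly3_degree_mono:
  assumes "poly3 r f" "r \<le> s"
  shows "poly3 s f"
proof -
  obtain c where c: "\<And>x. f x = (\<Sum>\<alpha>\<in>exponents_upto r. c \<alpha> * monomial3 \<alpha> x)"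
    using poly3E[OF assms(1)] by blast
  have "poly3 s (\<lambda>x. \<Sum>\<alpha>\<in>exponents_upto r. c \<alpha> * monomial3 (id \<alpha>) x)"
    by (rule poly3_monomial_sum)
       (use assms(2) finite_exponents_upto in \<open>auto simp: exponents_upto_def\<close>)
  then show ?thesis
    by (simp add: c[symmetric])
qed

lemma poly3_mult:
  assumes "poly3 r f" "poly3 s g"
  shows "poly3 (r + s) (\<lambda>x. f x * g x)"
proof -
  obtain c d where c: "\<And>x. f x = (\<Sum>\<alpha>\<in>exponents_upto r. c \<alpha> * monomial3 \<alpha> x)"
    and d: "\<And>x. g x = (\<Sum>\<beta>\<in>exponents_upto s. d \<beta> * monomial3 \<beta> x)"
    using poly3E[OF assms(1)] poly3E[OF assms(2)] by metis
  define \<kappa> :: "(nat \<times> nat \<times> nat) \<times> (nat \<times> nat \<times> nat) \<Rightarrow> nat \<times> nat \<times> nat"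
    where "\<kappa> = (\<lambda>((a, b, e), (a', b', e')). (a + a', b + b', e + e'))"
  have monomial3_mult: "monomial3 \<alpha> x * monomial3 \<beta> x = monomial3 (\<kappa> (\<alpha>, \<beta>)) x" for \<alpha> \<beta> x
    by (cases \<alpha>; cases \<beta>) (simp add: monomial3_def \<kappa>_def power_add mult_ac)
  have "f x * g x = (\<Sum>(\<alpha>, \<beta>)\<in>exponents_upto r \<times> exponents_upto s.
                      (c \<alpha> * d \<beta>) * monomial3 (\<kappa> (\<alpha>, \<beta>)) x)" for x
    by (simp add: c d sum_product sum.cartesian_product monomial3_mult[symmetric] mult_ac)
  moreover have "poly3 (r + s) (\<lambda>x. \<Sum>(\<alpha>, \<beta>)\<in>exponents_upto r \<times> exponents_upto s.
                                     (c \<alpha> * d \<beta>) * monomial3 (\<kappa> (\<alpha>, \<beta>)) x)"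
    using poly3_monomial_sum[of "exponents_upto r \<times> exponents_upto s" \<kappa> "r + s"
        "\<lambda>(\<alpha>, \<beta>). c \<alpha> * d \<beta>"] finite_exponents_upto
    by (auto simp: exponents_upto_def \<kappa>_def case_prod_beta)
  ultimately show ?thesis
    by simp
qed

lemma poly3_const: "0 \<le> r \<Longrightarrow> poly3 r (\<lambda>x. a)"
  using poly3_monomial_sum[of "{()}" "\<lambda>_. (0, 0, 0)" r "\<lambda>_. a"]
  by (simp add: exponents_upto_def monomial3_def)

lemma poly3_coord:
  assumes "1 \<le> r"
  shows "poly3 r (\<lambda>x. x $ k)"
proof -
  let ?\<alpha> = "if k = 1 then (1, 0, 0) else if k = 2 then (0, 1, 0) else (0, 0, 1)"
  have "poly3 r (\<lambda>x. \<Sum>i\<in>{()}. 1 * monomial3 ?\<alpha> x)"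
    by (rule poly3_monomial_sum) (use assms in \<open>auto simp: exponents_upto_def\<close>)
  moreover have "k = 1 \<or> k = 2 \<or> k = 3"
    using exhaust_3 by blast
  ultimately show ?thesis
    by (auto simp: monomial3_def)
qed

lemma poly3_power:
  assumes "poly3 r f" "0 \<le> r"
  shows "poly3 (int n * r) (\<lambda>x. f x ^ n)"
proof (induction n)
  case 0
  then show ?case
    by (simp add: poly3_const)
next
  case (Suc n)
  have "poly3 (int n * r + r) (\<lambda>x. f x ^ n * f x)"
    by (rule poly3_mult[OF Suc assms(1)])
  then show ?case
    by (simp add: algebra_simps)
qed

lemma poly3_prod:
  assumes "finite A" "\<And>i. i \<in> A \<Longrightarrow> poly3 1 (f i)"
  shows "poly3 (int (card A)) (\<lambda>x. \<Prod>i\<in>A. f i x)"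
  using assms
proof (induction A rule: finite_induct)
  case empty
  then show ?case
    by (simp add: poly3_const)
next
  case (insert a A)
  have "poly3 (1 + int (card A)) (\<lambda>x. f a x * (\<Prod>i\<in>A. f i x))"
    by (rule poly3_mult) (use insert in auto)
  then show ?case
    using insert by simp
qed

lemma poly3_compose_affine:
  assumes "poly3 r f" "\<And>k. poly3 1 (\<lambda>x. T x $ k)"
  shows "poly3 r (\<lambda>x. f (T x))"
proof -
  obtain c where c: "\<And>x. f x = (\<Sum>\<alpha>\<in>exponents_upto r. c \<alpha> * monomial3 \<alpha> x)"
    using poly3E[OF assms(1)] by blast
  have "poly3 r (\<lambda>x. c \<alpha> * monomial3 \<alpha> (T x))" if \<alpha>: "\<alpha> \<in> exponents_upto r" for \<alpha>
  proof -
    obtain a b d where abd: "\<alpha> = (a, b, d)"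
      by (cases \<alpha>) auto
    have "poly3 (int a * 1 + int b * 1 + int d * 1) (\<lambda>x. (T x $ 1)^a * (T x $ 2)^b * (T x $ 3)^d)"
      by (intro poly3_mult poly3_power assms(2)) auto
    then have "poly3 r (\<lambda>x. (T x $ 1)^a * (T x $ 2)^b * (T x $ 3)^d)"
      by (rule poly3_degree_mono) (use \<alpha> abd in \<open>auto simp: exponents_upto_def\<close>)
    then show ?thesis
      using poly3_cmult abd by (simp add: monomial3_def)
  qed
  then show ?thesis
    by (simp add: c poly3_sum finite_exponents_upto)
qed

lemma poly3_affine: "poly3 1 (\<lambda>x. w \<bullet> x + b)"
proof -
  have "poly3 1 (\<lambda>x. (w$1 * x$1 + w$2 * x$2 + w$3 * x$3) + b)"
    by (intro poly3_add poly3_cmult poly3_coord poly3_const) auto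
  then show ?thesis
    by (simp add: inner_vec_def sum_3)
qed

lemma poly3_inner:
  assumes "vpoly3 r E"
  shows "poly3 r (\<lambda>x. E x \<bullet> w)"
proof -
  have "poly3 r (\<lambda>x. \<Sum>k\<in>UNIV. w $ k * E x $ k)"
    by (rule poly3_sum) (use assms in \<open>auto simp: vpoly3_def intro: poly3_cmult\<close>)
  then show ?thesis
    by (simp add: inner_vec_def mult.commute)
qed

definition zero_coord :: "3 \<Rightarrow> real^3 \<Rightarrow> real^3" where
  "zero_coord k z = (\<chi> i. if i = k then 0 else z $ i)"

lemma zero_coord_nth [simp]: "zero_coord k z $ i = (if i = k then 0 else z $ i)"
  by (simp add: zero_coord_def)

lemma poly3_zero_coord: "poly3 1 (\<lambda>z. zero_coord k z $ i)"
  by (cases "i = k") (simp_all add: poly3_zero poly3_coord)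

lemma poly3_split_coord1:
  assumes "poly3 r h"
  obtains A where "poly3 (r - 1) A" "\<And>z. h z = h (zero_coord 1 z) + z$1 * A z"
proof -
  obtain c where c: "\<And>x. h x = (\<Sum>\<alpha>\<in>exponents_upto r. c \<alpha> * monomial3 \<alpha> x)"
    using poly3E[OF assms] by blast
  define S1 where "S1 = {\<alpha>\<in>exponents_upto r. fst \<alpha> \<noteq> 0}"
  define lower :: "nat \<times> nat \<times> nat \<Rightarrow> nat \<times> nat \<times> nat"
    where "lower = (\<lambda>(a, b, d). (a - 1, b, d))"
  define A where "A z = (\<Sum>\<alpha>\<in>S1. c \<alpha> * monomial3 (lower \<alpha>) z)" for z
  have "poly3 (r - 1) A"
    unfolding A_def
    by (rule poly3_monomial_sum)
       (use finite_exponents_upto in \<open>auto simp: S1_def exponents_upto_def lower_def\<close>)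
  moreover have "h z = h (zero_coord 1 z) + z$1 * A z" for z
  proof -
    have drop: "monomial3 \<alpha> (zero_coord 1 z) = (if fst \<alpha> = 0 then monomial3 \<alpha> z else 0)" for \<alpha>
      by (cases \<alpha>) (auto simp: monomial3_def)
    have lower: "fst \<alpha> \<noteq> 0 \<Longrightarrow> monomial3 \<alpha> z = z$1 * monomial3 (lower \<alpha>) z" for \<alpha>
      by (cases \<alpha>) (auto simp: monomial3_def lower_def simp flip: power_Suc)
    have "h z = (\<Sum>\<alpha>\<in>exponents_upto r. if fst \<alpha> = 0 then c \<alpha> * monomial3 \<alpha> z else 0)
              + (\<Sum>\<alpha>\<in>S1. c \<alpha> * monomial3 \<alpha> z)"
      unfolding c S1_def sum.inter_filter[OF finite_exponents_upto] sum.distrib[symmetric]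
      by (rule sum.cong) auto
    also have "(\<Sum>\<alpha>\<in>exponents_upto r. if fst \<alpha> = 0 then c \<alpha> * monomial3 \<alpha> z else 0)
             = h (zero_coord 1 z)"
      unfolding c drop by (rule sum.cong) auto
    also have "(\<Sum>\<alpha>\<in>S1. c \<alpha> * monomial3 \<alpha> z) = z$1 * A z"
      unfolding A_def sum_distrib_left by (rule sum.cong) (auto simp: S1_def lower)
    finally show ?thesis .
  qed
  ultimately show thesis
    using that by blast
qed

lemma poly3_on_line:
  assumes "poly3 r f"
  obtains P where "\<And>t. f (c + t *\<^sub>R d) = poly P t"
proof -
  obtain a where a: "\<And>x. f x = (\<Sum>\<alpha>\<in>exponents_upto r. a \<alpha> * monomial3 \<alpha> x)"
    using poly3E[OF assms] by blast
  define L where "L k = [:c$k, d$k:]" for k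
  define P where "P = (\<Sum>\<alpha>\<in>exponents_upto r.
      smult (a \<alpha>) (case \<alpha> of (i, j, l) \<Rightarrow> L 1 ^ i * L 2 ^ j * L 3 ^ l))"
  have "f (c + t *\<^sub>R d) = poly P t" for t
    unfolding a P_def poly_sum
    by (rule sum.cong) (auto simp: monomial3_def L_def algebra_simps split: prod.splits)
  then show thesis
    by (rule that)
qed

text \<open>On each line through the centre the polynomial restricts to a univariate one with
  infinitely many roots.\<close>

lemma poly3_eq_0_if_eq_0_on_ball:
  assumes "poly3 r f" "e > 0" "\<And>y. dist c y < e \<Longrightarrow> f y = 0"
  shows "f x = 0"
proof -
  obtain P where P: "\<And>t. f (c + t *\<^sub>R (x - c)) = poly P t"
    using poly3_on_line[OF assms(1)] by blast
  define \<delta> where "\<delta> = e / (norm (x - c) + 1)"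
  have \<delta>: "\<delta> > 0"
    using assms(2) by (simp add: \<delta>_def add_nonneg_pos)
  have "{0<..<\<delta>} \<subseteq> {t. poly P t = 0}"
  proof
    fix t assume t: "t \<in> {0<..<\<delta>}"
    have "dist c (c + t *\<^sub>R (x - c)) = t * norm (x - c)"
      using t by (simp add: dist_norm)
    also have "\<dots> \<le> t * (norm (x - c) + 1)"
      using t by simp
    also have "\<dots> < \<delta> * (norm (x - c) + 1)"
      using t by (intro mult_strict_right_mono) (auto simp: add_nonneg_pos)
    also have "\<dots> = e"
      using norm_ge_zero[of "x - c"] unfolding \<delta>_def by (simp add: divide_simps; linarith)
    finally show "t \<in> {t. poly P t = 0}"
      using assms(3)[of "c + t *\<^sub>R (x - c)"] P[of t] by simp
  qed
  then have "infinite {t. poly P t = 0}"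
    using \<delta> infinite_Ioo_iff infinite_super by blast
  then have "P = 0"
    using poly_roots_finite by blast
  then show ?thesis
    using P[of 1] by simp
qed

text \<open>The triangle \<open>0 < z$2, 0 < z$3, z$2 + z$3 < 1\<close> of the plane \<open>z$1 = 0\<close> contains a
  disc, so it suffices that \<open>h\<close> vanishes there.\<close>

lemma poly3_divisible_by_coord1:
  assumes h: "poly3 r h"
    and vanish: "\<And>z. z$1 = 0 \<Longrightarrow> 0 < z$2 \<Longrightarrow> 0 < z$3 \<Longrightarrow> z$2 + z$3 < 1 \<Longrightarrow> h z = 0"
  obtains A where "poly3 (r - 1) A" "\<And>z. h z = z$1 * A z"
proof -
  obtain A where A: "poly3 (r - 1) A" "\<And>z. h z = h (zero_coord 1 z) + z$1 * A z"
    using poly3_split_coord1[OF h] by blast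
  have "h (zero_coord 1 z) = 0" for z
  proof (rule poly3_eq_0_if_eq_0_on_ball[where f = "\<lambda>z. h (zero_coord 1 z)" and e = "1/8" and c = "\<chi> i. 1/4"])
    show "poly3 r (\<lambda>z. h (zero_coord 1 z))"
      using h poly3_zero_coord by (rule poly3_compose_affine)
  next
    fix y :: "real^3"
    assume y: "dist (\<chi> i. 1/4) y < 1/8"
    have yk: "\<bar>y$k - 1/4\<bar> < 1/8" for k
      using component_le_norm_cart[of "(\<chi> i. 1/4) - y" k] y
      by (simp add: dist_norm abs_minus_commute)
    have "1/8 < y$k \<and> y$k < 3/8" for k
      using yk[of k] unfolding abs_less_iff by auto
    from this[of 2] this[of 3] show "h (zero_coord 1 y) = 0"
      by (intro vanish) auto
  qed simp
  with A show thesis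
    using that by simp
qed

lemma cross3_cramer:
  fixes a b c y :: "real^3"
  shows "(a \<bullet> cross3 b c) *\<^sub>R y
       = (y \<bullet> cross3 b c) *\<^sub>R a + (y \<bullet> cross3 c a) *\<^sub>R b + (y \<bullet> cross3 a b) *\<^sub>R c"
  by (simp add: cross3_simps forall_3)

lemma cross3_cross3_right:
  fixes w n :: "real^3"
  shows "cross3 w (cross3 w n) = (w \<bullet> n) *\<^sub>R w - (w \<bullet> w) *\<^sub>R n"
  by (simp add: cross3_simps forall_3)

lemma cross3_cross3_left:
  fixes a b n :: "real^3"
  shows "cross3 (cross3 a b) n = (a \<bullet> n) *\<^sub>R b - (b \<bullet> n) *\<^sub>R a"
  by (simp add: cross3_simps forall_3)

lemma parallel_if_cross3_eq_0:
  fixes e n :: "real^3"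
  assumes "cross3 e n = 0" "n \<noteq> 0"
  shows "e = ((e \<bullet> n) / (n \<bullet> n)) *\<^sub>R n"
proof -
  have "cross3 n e = 0"
    using assms(1) cross_skew[of e n] by simp
  then have eq: "(n \<bullet> n) *\<^sub>R e = (e \<bullet> n) *\<^sub>R n"
    using cross3_cross3_right[of n e] by (simp add: inner_commute)
  have "e = (1 / (n \<bullet> n)) *\<^sub>R ((n \<bullet> n) *\<^sub>R e)"
    using assms(2) by simp
  also have "\<dots> = ((e \<bullet> n) / (n \<bullet> n)) *\<^sub>R n"
    unfolding eq by simp
  finally show ?thesis .
qed

lemma parallel_unit_if_cross3_eq_0:
  fixes e n :: "real^3"
  assumes "cross3 e n = 0" "norm n = 1"
  shows "e = (e \<bullet> n) *\<^sub>R n"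
proof -
  have "n \<noteq> 0"
    using assms(2) by auto
  then show ?thesis
    using parallel_if_cross3_eq_0[OF assms(1)] assms(2) by (simp add: dot_square_norm)
qed

lemma cross3_cross3_eq_0_iff:
  fixes a b n :: "real^3"
  assumes "cross3 a b \<noteq> 0"
  shows "cross3 (cross3 a b) n = 0 \<longleftrightarrow> n \<bullet> a = 0 \<and> n \<bullet> b = 0"
proof
  assume "cross3 (cross3 a b) n = 0"
  then have "n = ((n \<bullet> cross3 a b) / (cross3 a b \<bullet> cross3 a b)) *\<^sub>R cross3 a b"
    using parallel_if_cross3_eq_0[of n "cross3 a b"] assms cross_skew[of "cross3 a b" n] by simp
  then obtain c where "n = c *\<^sub>R cross3 a b"
    by blast
  then show "n \<bullet> a = 0 \<and> n \<bullet> b = 0"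
    by (simp add: dot_cross_self)
qed (simp add: cross3_cross3_left inner_commute)

section \<open>Barycentric coordinates\<close>

lemma lessThan_4_eq:
  assumes "a < 4" "b < 4" "c < 4" "d < 4" "distinct [a, b, c, d]"
  shows "{..<4::nat} = {a, b, c, d}"
proof -
  have "card {a, b, c, d} = 4" "{a, b, c, d} \<subseteq> {..<4::nat}"
    using assms distinct_card[OF assms(5)] by auto
  then show ?thesis
    by (metis card_lessThan card_subset_eq finite_lessThan)
qed

lemma obtain_remaining_indices:
  assumes "a < (4::nat)" "b < 4" "a \<noteq> b"
  obtains c d where "c < 4" "d < 4" "distinct [a, b, c, d]"
proof -
  have "card ({..<4::nat} - {a, b}) = 2"
    using assms by (simp add: card_Diff_subset)
  then obtain c d where "{..<4::nat} - {a, b} = {c, d}" "c \<noteq> d"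
    by (auto simp: card_2_iff)
  then show thesis
    using assms that by (auto simp: set_eq_iff)
qed

lemma obtain_other_indices:
  assumes "a < (4::nat)"
  obtains b c d where "b < 4" "c < 4" "d < 4" "distinct [a, b, c, d]"
proof -
  let ?b = "if a = 0 then 1 else 0 :: nat"
  have "?b < 4" "a \<noteq> ?b"
    by auto
  then obtain c d where "c < 4" "d < 4" "distinct [a, ?b, c, d]"
    using obtain_remaining_indices[OF assms] by blast
  then show thesis
    using that[of ?b c d] by auto
qed

lemma sum_lessThan_4: "(\<Sum>k<4::nat. f k) = f 0 + f 1 + f 2 + (f 3 :: 'a::comm_monoid_add)"
  by (simp add: eval_nat_numeral)

lemma affine_combination_lessThan_4:
  fixes l :: "nat \<Rightarrow> real" and v :: "nat \<Rightarrow> 'a::real_vector"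
  assumes "(\<Sum>k<4. l k) = 1"
  shows "(\<Sum>k<4. l k *\<^sub>R v k)
       = v 0 + (l 1 *\<^sub>R (v 1 - v 0) + l 2 *\<^sub>R (v 2 - v 0) + l 3 *\<^sub>R (v 3 - v 0))"
proof -
  have l0: "l 0 = 1 - l 1 - l 2 - l 3"
    using assms by (simp add: sum_lessThan_4)
  show ?thesis
    unfolding sum_lessThan_4 l0 by (simp add: algebra_simps)
qed

lemma triple_product_edges_neq_0:
  assumes T: "tetrahedron v" and abcd: "p < 4" "q < 4" "r < 4" "s < 4" "distinct [p, q, r, s]"
  shows "(v q - v p) \<bullet> cross3 (v r - v p) (v s - v p) \<noteq> 0"
proof
  assume "(v q - v p) \<bullet> cross3 (v r - v p) (v s - v p) = 0"
  let ?A = "vector [v q - v p, v r - v p, v s - v p] :: real^3^3"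
  have "\<not> invertible ?A"
    using \<open>(v q - v p) \<bullet> _ = 0\<close> by (simp add: dot_cross_det invertible_det_nz)
  then obtain c i where c: "(\<Sum>i\<in>UNIV. c i *s row i ?A) = 0" "c i \<noteq> 0"
    unfolding invertible_right_inverse matrix_right_invertible_independent_rows by blast
  have rows: "row 1 ?A = v q - v p" "row 2 ?A = v r - v p" "row 3 ?A = v s - v p"
    by (simp_all add: row_def vec_eq_iff)
  have dependence: "c 1 *\<^sub>R (v q - v p) + c 2 *\<^sub>R (v r - v p) + c 3 *\<^sub>R (v s - v p) = 0"
    using c(1) by (simp add: sum_3 rows scalar_mult_eq_scaleR)
  have distinct: "v p \<noteq> v q" "v p \<noteq> v r" "v p \<noteq> v s" "v q \<noteq> v r" "v q \<noteq> v s" "v r \<noteq> v s"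
    using T abcd by (auto simp: tetrahedron_def dest: inj_onD)
  have vertices: "v ` {..<4} = {v p, v q, v r, v s}"
    using lessThan_4_eq[OF abcd] by auto
  define u where "u y = (if y = v q then c 1 else if y = v r then c 2 else if y = v s then c 3
      else if y = v p then - (c 1 + c 2 + c 3) else 0)" for y
  have "sum u (v ` {..<4}) = 0" "(\<Sum>y\<in>v ` {..<4}. u y *\<^sub>R y) = 0"
    using distinct dependence by (simp_all add: vertices u_def algebra_simps)
  moreover have "\<exists>y\<in>v ` {..<4}. u y \<noteq> 0"
    using c(2) exhaust_3[of i] distinct by (auto simp: vertices u_def)
  ultimately have "affine_dependent (v ` {..<4})"
    using affine_dependent_explicit_finite[of "v ` {..<4}"] by blast
  with T show False
    by (simp add: tetrahedron_def)
qed

text \<open>Cramer's rule for the edge vectors at \<open>v 0\<close> gives the barycentric coordinates explicitly.\<close>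

definition edge_triple_product :: "(nat \<Rightarrow> real^3) \<Rightarrow> real" where
  "edge_triple_product v = (v 1 - v 0) \<bullet> cross3 (v 2 - v 0) (v 3 - v 0)"

definition edge_cofactor :: "(nat \<Rightarrow> real^3) \<Rightarrow> nat \<Rightarrow> real^3" where
  "edge_cofactor v k =
    (if k = 1 then cross3 (v 2 - v 0) (v 3 - v 0)
     else if k = 2 then cross3 (v 3 - v 0) (v 1 - v 0)
     else if k = 3 then cross3 (v 1 - v 0) (v 2 - v 0) else 0)"

definition bary_explicit :: "(nat \<Rightarrow> real^3) \<Rightarrow> nat \<Rightarrow> real^3 \<Rightarrow> real" where
  "bary_explicit v k x =
    (if k \<in> {1, 2, 3} then ((x - v 0) \<bullet> edge_cofactor v k) / edge_triple_product v
     else if k = 0 then 1 - (\<Sum>j\<in>{1, 2, 3}. ((x - v 0) \<bullet> edge_cofactor v j) / edge_triple_product v)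
     else 0)"

lemma edge_triple_product_neq_0: "tetrahedron v \<Longrightarrow> edge_triple_product v \<noteq> 0"
  unfolding edge_triple_product_def by (rule triple_product_edges_neq_0) auto

lemma sum_bary_explicit: "(\<Sum>k<4. bary_explicit v k x) = 1"
  by (simp add: sum_lessThan_4 bary_explicit_def)

lemma bary_explicit_combination:
  assumes D: "edge_triple_product v \<noteq> 0"
  shows "(\<Sum>k<4. bary_explicit v k x *\<^sub>R v k) = x"
proof -
  let ?a = "v 1 - v 0" and ?b = "v 2 - v 0" and ?c = "v 3 - v 0"
  have cramer: "edge_triple_product v *\<^sub>R (x - v 0)
      = ((x - v 0) \<bullet> edge_cofactor v 1) *\<^sub>R ?a + ((x - v 0) \<bullet> edge_cofactor v 2) *\<^sub>R ?b
        + ((x - v 0) \<bullet> edge_cofactor v 3) *\<^sub>R ?c"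
    using cross3_cramer[of ?a ?b ?c "x - v 0"]
    by (simp add: edge_triple_product_def edge_cofactor_def)
  have "x - v 0 = (1 / edge_triple_product v) *\<^sub>R (edge_triple_product v *\<^sub>R (x - v 0))"
    using D by simp
  also have "\<dots> = bary_explicit v 1 x *\<^sub>R ?a + bary_explicit v 2 x *\<^sub>R ?b
                  + bary_explicit v 3 x *\<^sub>R ?c"
    unfolding cramer scaleR_add_right scaleR_scaleR by (simp add: bary_explicit_def)
  finally show ?thesis
    unfolding affine_combination_lessThan_4[OF sum_bary_explicit] by (simp add: diff_eq_eq add.commute)
qed

lemma bary_explicit_unique:
  assumes D: "edge_triple_product v \<noteq> 0"
    and l: "(\<Sum>k<4. l k) = 1" "(\<Sum>k<4. l k *\<^sub>R v k) = x" and k: "k < 4"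
  shows "l k = bary_explicit v k x"
proof -
  let ?a = "v 1 - v 0" and ?b = "v 2 - v 0" and ?c = "v 3 - v 0"
  have l0: "l 0 = 1 - l 1 - l 2 - l 3"
    using l(1) by (simp add: sum_lessThan_4)
  have "x - v 0 = l 1 *\<^sub>R ?a + l 2 *\<^sub>R ?b + l 3 *\<^sub>R ?c"
    using l(2)[symmetric] by (simp add: affine_combination_lessThan_4[OF l(1)])
  then have "(x - v 0) \<bullet> cross3 ?b ?c = l 1 * (?a \<bullet> cross3 ?b ?c)"
    "(x - v 0) \<bullet> cross3 ?c ?a = l 2 * (?b \<bullet> cross3 ?c ?a)"
    "(x - v 0) \<bullet> cross3 ?a ?b = l 3 * (?c \<bullet> cross3 ?a ?b)"
    by (simp_all add: inner_add_left dot_cross_self)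
  moreover have "?b \<bullet> cross3 ?c ?a = ?a \<bullet> cross3 ?b ?c" "?c \<bullet> cross3 ?a ?b = ?a \<bullet> cross3 ?b ?c"
    by (simp_all add: cross3_simps)
  ultimately have "l j = bary_explicit v j x" if "j \<in> {1, 2, 3}" for j
    using that D by (auto simp: bary_explicit_def edge_cofactor_def edge_triple_product_def)
  moreover have "k = 0 \<or> k \<in> {1, 2, 3}"
    using k by auto
  ultimately show ?thesis
    using l0 by (auto simp: bary_explicit_def)
qed

lemma bary_eq_bary_explicit:
  assumes "tetrahedron v"
  shows "bary v = bary_explicit v"
proof (intro ext)
  fix i x
  have D: "edge_triple_product v \<noteq> 0"
    using assms by (rule edge_triple_product_neq_0)
  have "(THE l. (\<forall>k\<ge>4. l k = 0) \<and> (\<Sum>k<4. l k) = 1 \<and> (\<Sum>k<4. l k *\<^sub>R v k) = x)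
      = (\<lambda>k. bary_explicit v k x)"
  proof (rule the_equality)
    show "(\<forall>k\<ge>4. bary_explicit v k x = 0) \<and> (\<Sum>k<4. bary_explicit v k x) = 1
        \<and> (\<Sum>k<4. bary_explicit v k x *\<^sub>R v k) = x"
      using sum_bary_explicit bary_explicit_combination[OF D] by (auto simp: bary_explicit_def)
  next
    fix l :: "nat \<Rightarrow> real"
    assume "(\<forall>k\<ge>4. l k = 0) \<and> (\<Sum>k<4. l k) = 1 \<and> (\<Sum>k<4. l k *\<^sub>R v k) = x"
    then show "l = (\<lambda>k. bary_explicit v k x)"
      using bary_explicit_unique[OF D] by (force simp: bary_explicit_def not_less)
  qed
  then show "bary v i x = bary_explicit v i x"
    by (simp add: bary_def)
qed

lemma sum_bary: "tetrahedron v \<Longrightarrow> (\<Sum>k<4. bary v k x) = 1"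
  by (simp add: bary_eq_bary_explicit sum_bary_explicit)

lemma bary_combination: "tetrahedron v \<Longrightarrow> (\<Sum>k<4. bary v k x *\<^sub>R v k) = x"
  by (simp add: bary_eq_bary_explicit bary_explicit_combination edge_triple_product_neq_0)

lemma bary_unique:
  assumes "tetrahedron v" "(\<Sum>k<4. l k) = 1" "(\<Sum>k<4. l k *\<^sub>R v k) = x" "k < 4"
  shows "bary v k x = l k"
  using bary_explicit_unique[OF edge_triple_product_neq_0 assms(2-4)] assms(1)
  by (simp add: bary_eq_bary_explicit)

lemma poly3_bary:
  assumes "tetrahedron v"
  shows "poly3 1 (bary v k)"
proof -
  have affine: "poly3 1 (\<lambda>x. ((x - v 0) \<bullet> edge_cofactor v j) / edge_triple_product v)" for j
  proof -
    have "(\<lambda>x. ((x - v 0) \<bullet> edge_cofactor v j) / edge_triple_product v)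
        = (\<lambda>x. ((1 / edge_triple_product v) *\<^sub>R edge_cofactor v j) \<bullet> x
               + (- (v 0 \<bullet> edge_cofactor v j) / edge_triple_product v))"
      by (simp add: fun_eq_iff inner_diff_right inner_commute diff_divide_distrib)
    then show ?thesis
      using poly3_affine by metis
  qed
  have "poly3 1 (bary_explicit v k)"
  proof (cases "k \<in> {1, 2, 3}")
    case True
    then show ?thesis
      using affine[of k] unfolding bary_explicit_def[abs_def] by simp
  next
    case False
    then show ?thesis
      unfolding bary_explicit_def[abs_def]
      by (cases "k = 0") (auto intro!: poly3_diff poly3_add poly3_const affine simp: poly3_zero)
  qed
  then show ?thesis
    by (simp add: bary_eq_bary_explicit[OF assms])
qed

lemma bary_eq_0_on_face:
  assumes T: "tetrahedron v" and i: "i < 4" and x: "x \<in> face v i"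
  shows "bary v i x = 0"
proof -
  let ?J = "{..<4} - {i}"
  have fin: "finite (v ` ?J)"
    by simp
  obtain u where u: "sum u (v ` ?J) = 1" "(\<Sum>y\<in>v ` ?J. u y *\<^sub>R y) = x"
    using x unfolding face_def convex_hull_finite[OF fin] by blast
  have "inj_on v {..<4}"
    using T by (simp add: tetrahedron_def)
  then have inj: "inj_on v ?J"
    by (rule inj_on_subset) auto
  define l where "l k = (if k < 4 \<and> k \<noteq> i then u (v k) else 0)" for k
  have s1: "(\<Sum>k<4. l k) = (\<Sum>k\<in>?J. u (v k))"
    using sum.remove[of "{..<4}" i l] i by (simp add: l_def)
  have s2: "(\<Sum>k<4. l k *\<^sub>R v k) = (\<Sum>k\<in>?J. u (v k) *\<^sub>R v k)"
    using sum.remove[of "{..<4}" i "\<lambda>k. l k *\<^sub>R v k"] i by (simp add: l_def)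
  have "(\<Sum>k<4. l k) = 1"
    using u(1) s1 sum.reindex[OF inj, of u] by simp
  moreover have "(\<Sum>k<4. l k *\<^sub>R v k) = x"
    using u(2) s2 sum.reindex[OF inj, of "\<lambda>y. u y *\<^sub>R y"] by simp
  ultimately have "bary v i x = l i"
    using bary_unique[OF T _ _ i] by blast
  then show ?thesis
    by (simp add: l_def)
qed

lemma in_face_if_bary:
  assumes T: "tetrahedron v" and i: "i < 4"
    and x: "bary v i x = 0" "\<And>k. k < 4 \<Longrightarrow> 0 \<le> bary v k x"
  shows "x \<in> face v i"
proof -
  let ?J = "{..<4} - {i}"
  have "x = (\<Sum>k\<in>?J. bary v k x *\<^sub>R v k)"
    using bary_combination[OF T, of x] sum.remove[of "{..<4}" i "\<lambda>k. bary v k x *\<^sub>R v k"] i x(1)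
    by simp
  moreover have "(\<Sum>k\<in>?J. bary v k x) = 1"
    using sum_bary[OF T, of x] sum.remove[of "{..<4}" i "\<lambda>k. bary v k x"] i x(1) by simp
  then have "(\<Sum>k\<in>?J. bary v k x *\<^sub>R v k) \<in> convex hull (v ` ?J)"
    by (intro convex_sum) (use x(2) in \<open>auto intro: hull_inc\<close>)
  ultimately show ?thesis
    by (simp add: face_def)
qed

section \<open>Face normals\<close>

definition is_unit_face_normal :: "(nat \<Rightarrow> real^3) \<Rightarrow> nat \<Rightarrow> real^3 \<Rightarrow> bool" where
  "is_unit_face_normal v i n \<longleftrightarrow> norm n = 1
     \<and> (\<forall>j k. j < 4 \<and> k < 4 \<and> j \<noteq> i \<and> k \<noteq> i \<longrightarrow> n \<bullet> (v j - v k) = 0)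
     \<and> n \<bullet> (v i - v (if i = 0 then 1 else 0)) < 0"

lemma unit_vector_eq_if_sign:
  fixes w d :: "real^3"
  assumes "norm (c *\<^sub>R w) = 1" "(c *\<^sub>R w) \<bullet> d < 0"
  shows "c *\<^sub>R w = (- sgn (d \<bullet> w) / norm w) *\<^sub>R w"
proof -
  have "w \<noteq> 0"
    using assms(1) by auto
  then have "\<bar>c\<bar> = 1 / norm w"
    using assms(1) by (simp add: eq_divide_eq)
  moreover have "c * (d \<bullet> w) < 0"
    using assms(2) by (simp add: inner_commute)
  ultimately have "c = - sgn (d \<bullet> w) / norm w"
    by (cases "d \<bullet> w" rule: linorder_cases) (auto simp: mult_less_0_iff abs_if split: if_splits)
  then show ?thesis
    by simp
qed

lemma orthogonal_face_edges_iff: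
  fixes i j l m :: nat
  assumes i: "i < 4" and jlm: "j < 4" "l < 4" "m < 4" "distinct [j, i, l, m]"
  shows "(\<forall>a b. a < 4 \<and> b < 4 \<and> a \<noteq> i \<and> b \<noteq> i \<longrightarrow> n \<bullet> (v a - v b) = 0)
    \<longleftrightarrow> n \<bullet> (v l - v j) = 0 \<and> n \<bullet> (v m - v j) = 0"
proof (intro iffI allI impI)
  fix a b
  assume n: "n \<bullet> (v l - v j) = 0 \<and> n \<bullet> (v m - v j) = 0" and "a < 4 \<and> b < 4 \<and> a \<noteq> i \<and> b \<noteq> i"
  then have "a \<in> {j, l, m}" "b \<in> {j, l, m}"
    using lessThan_4_eq[OF jlm(1) i jlm(2-4)] by auto
  then have "n \<bullet> (v a - v j) = 0" "n \<bullet> (v b - v j) = 0"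
    using n by auto
  then have "n \<bullet> ((v a - v j) - (v b - v j)) = 0"
    by (simp add: inner_diff_right)
  then show "n \<bullet> (v a - v b) = 0"
    by simp
qed (use jlm in auto)

lemma ex1_unit_face_normal:
  assumes T: "tetrahedron v" and i: "i < 4"
  shows "\<exists>!n. is_unit_face_normal v i n"
proof -
  define j where "j = (if i = 0 then 1 else (0::nat))"
  have j: "j < 4" "j \<noteq> i"
    by (auto simp: j_def)
  obtain l m where lm: "l < 4" "m < 4" "distinct [j, i, l, m]"
    using obtain_remaining_indices[OF j(1) i j(2)] by blast
  define w where "w = cross3 (v l - v j) (v m - v j)"
  define t where "t = (v i - v j) \<bullet> w"
  have t: "t \<noteq> 0"
    unfolding t_def w_def using triple_product_edges_neq_0[OF T j(1) i lm] .
  then have w: "w \<noteq> 0"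
    by (auto simp: t_def)
  have iff: "is_unit_face_normal v i n
      \<longleftrightarrow> norm n = 1 \<and> cross3 w n = 0 \<and> n \<bullet> (v i - v j) < 0" for n
    unfolding is_unit_face_normal_def j_def[symmetric] orthogonal_face_edges_iff[OF i j(1) lm] w_def
      cross3_cross3_eq_0_iff[OF w[unfolded w_def]] by auto
  define n0 where "n0 = (- sgn t / norm w) *\<^sub>R w"
  have "is_unit_face_normal v i n0"
    unfolding iff
  proof (intro conjI)
    show "norm n0 = 1" "cross3 w n0 = 0"
      using w t by (simp_all add: n0_def abs_sgn cross_mult_right)
    have "n0 \<bullet> (v i - v j) = - (sgn t * t) / norm w"
      by (simp add: n0_def t_def inner_commute)
    also have "\<dots> = - \<bar>t\<bar> / norm w"
      by (simp add: abs_sgn mult.commute)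
    also have "\<dots> < 0"
      using t w by simp
    finally show "n0 \<bullet> (v i - v j) < 0" .
  qed
  moreover have "n = n0" if "is_unit_face_normal v i n" for n
  proof -
    have "norm n = 1" "n \<bullet> (v i - v j) < 0" "n = ((n \<bullet> w) / (w \<bullet> w)) *\<^sub>R w"
      using that parallel_if_cross3_eq_0[of n w] w cross_skew[of w n] by (auto simp: iff)
    then show ?thesis
      using unit_vector_eq_if_sign[of "(n \<bullet> w) / (w \<bullet> w)" w "v i - v j"]
      by (simp add: n0_def t_def inner_commute)
  qed
  ultimately show ?thesis
    by blast
qed

lemma face_normal_is_unit_face_normal:
  assumes "tetrahedron v" "i < 4"
  shows "is_unit_face_normal v i (face_normal v i)"
proof -
  have "face_normal v i = (THE n. is_unit_face_normal v i n)"
    by (simp add: face_normal_def is_unit_face_normal_def)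
  then show ?thesis
    using theI'[OF ex1_unit_face_normal[OF assms]] by simp
qed

lemma norm_face_normal: "tetrahedron v \<Longrightarrow> i < 4 \<Longrightarrow> norm (face_normal v i) = 1"
  using face_normal_is_unit_face_normal by (simp add: is_unit_face_normal_def)

lemma face_normal_orthogonal:
  "tetrahedron v \<Longrightarrow> i < 4 \<Longrightarrow> j < 4 \<Longrightarrow> k < 4 \<Longrightarrow> j \<noteq> i \<Longrightarrow> k \<noteq> i
    \<Longrightarrow> face_normal v i \<bullet> (v j - v k) = 0"
  using face_normal_is_unit_face_normal by (simp add: is_unit_face_normal_def)

lemma face_normal_outward:
  "tetrahedron v \<Longrightarrow> i < 4 \<Longrightarrow> face_normal v i \<bullet> (v i - v (if i = 0 then 1 else 0)) < 0"
  using face_normal_is_unit_face_normal by (simp add: is_unit_face_normal_def)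

lemma face_normal_vertex_edge_neq_0:
  assumes T: "tetrahedron v" and "i < 4" "l < 4" "l \<noteq> i"
  shows "face_normal v i \<bullet> (v i - v l) \<noteq> 0"
proof -
  let ?r = "if i = 0 then 1 else 0 :: nat"
  have "face_normal v i \<bullet> (v i - v l)
      = face_normal v i \<bullet> (v i - v ?r) + face_normal v i \<bullet> (v ?r - v l)"
    by (simp add: inner_diff_right)
  also have "face_normal v i \<bullet> (v ?r - v l) = 0"
    using assms by (intro face_normal_orthogonal) auto
  finally show ?thesis
    using face_normal_outward[OF T \<open>i < 4\<close>] by simp
qed

lemma face_normals_independent:
  assumes T: "tetrahedron v"
  shows "face_normal v 1 \<bullet> cross3 (face_normal v 2) (face_normal v 3) \<noteq> 0"
proof
  let ?n = "face_normal v"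
  let ?w = "cross3 (?n 2) (?n 3)"
  assume "?n 1 \<bullet> ?w = 0"
  then have "0 = (?w \<bullet> ?w) *\<^sub>R ?n 1 + (?w \<bullet> cross3 (?n 3) (?n 1)) *\<^sub>R ?n 2
                 + (?w \<bullet> cross3 (?n 1) (?n 2)) *\<^sub>R ?n 3"
    using cross3_cramer[of "?n 1" "?n 2" "?n 3" ?w] by simp
  then have "0 = ((?w \<bullet> ?w) *\<^sub>R ?n 1 + (?w \<bullet> cross3 (?n 3) (?n 1)) *\<^sub>R ?n 2
                 + (?w \<bullet> cross3 (?n 1) (?n 2)) *\<^sub>R ?n 3) \<bullet> (v 1 - v 0)"
    by (metis inner_zero_left)
  also have "\<dots> = (?w \<bullet> ?w) * (?n 1 \<bullet> (v 1 - v 0))"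
    using face_normal_orthogonal[OF T, of 2 1 0] face_normal_orthogonal[OF T, of 3 1 0]
    by (simp add: inner_add_left)
  finally have "0 = (?w \<bullet> ?w) * (?n 1 \<bullet> (v 1 - v 0))" .
  moreover have "?n 1 \<bullet> (v 1 - v 0) \<noteq> 0"
    using face_normal_vertex_edge_neq_0[OF T, of 1 0] by simp
  ultimately have "cross3 (?n 2) (?n 3) = 0"
    by simp
  then have "?n 2 = (?n 2 \<bullet> ?n 3) *\<^sub>R ?n 3"
    using parallel_unit_if_cross3_eq_0 norm_face_normal[OF T, of 3] by simp
  then have "?n 2 \<bullet> (v 2 - v 0) = (?n 2 \<bullet> ?n 3) * (?n 3 \<bullet> (v 2 - v 0))"
    by (metis inner_scaleR_left)
  also have "?n 3 \<bullet> (v 2 - v 0) = 0"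
    using face_normal_orthogonal[OF T, of 3 2 0] by simp
  finally show False
    using face_normal_vertex_edge_neq_0[OF T, of 2 0] by simp
qed

section \<open>Division by barycentric coordinates\<close>

definition bary_chart :: "(nat \<Rightarrow> real^3) \<Rightarrow> nat \<Rightarrow> nat \<Rightarrow> nat \<Rightarrow> nat \<Rightarrow> real^3 \<Rightarrow> real^3" where
  "bary_chart v a b c d z = z$1 *\<^sub>R v a + z$2 *\<^sub>R v b + z$3 *\<^sub>R v c + (1 - z$1 - z$2 - z$3) *\<^sub>R v d"

definition bary_coords :: "(nat \<Rightarrow> real^3) \<Rightarrow> nat \<Rightarrow> nat \<Rightarrow> nat \<Rightarrow> real^3 \<Rightarrow> real^3" where
  "bary_coords v a b c x = vector [bary v a x, bary v b x, bary v c x]"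

lemma bary_coords_nth [simp]:
  "bary_coords v a b c x $ 1 = bary v a x"
  "bary_coords v a b c x $ 2 = bary v b x"
  "bary_coords v a b c x $ 3 = bary v c x"
  by (simp_all add: bary_coords_def)

lemma poly3_bary_chart: "poly3 1 (\<lambda>z. bary_chart v a b c d z $ k)"
proof -
  have "poly3 1 (\<lambda>z. v a $ k * z$1 + v b $ k * z$2 + v c $ k * z$3
                      + v d $ k * (1 - z$1 - z$2 - z$3))"
    by (intro poly3_add poly3_cmult poly3_diff poly3_const poly3_coord) auto
  then show ?thesis
    by (simp add: bary_chart_def algebra_simps)
qed

lemma poly3_bary_coords: "tetrahedron v \<Longrightarrow> poly3 1 (\<lambda>x. bary_coords v a b c x $ k)"
  using exhaust_3[of k] by (auto simp: poly3_bary)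

lemma bary_bary_chart:
  assumes T: "tetrahedron v" and abcd: "a < 4" "b < 4" "c < 4" "d < 4" "distinct [a, b, c, d]"
  shows "bary v a (bary_chart v a b c d z) = z$1" "bary v b (bary_chart v a b c d z) = z$2"
    "bary v c (bary_chart v a b c d z) = z$3"
    "bary v d (bary_chart v a b c d z) = 1 - z$1 - z$2 - z$3"
proof -
  define l where "l k = (if k = a then z$1 else if k = b then z$2 else if k = c then z$3
     else if k = d then 1 - z$1 - z$2 - z$3 else 0)" for k
  have four: "{..<4::nat} = {a, b, c, d}"
    using lessThan_4_eq[OF abcd] .
  have "(\<Sum>k<4. l k) = 1" "(\<Sum>k<4. l k *\<^sub>R v k) = bary_chart v a b c d z"
    unfolding four using abcd(5) by (simp_all add: l_def bary_chart_def)
  then have "bary v k (bary_chart v a b c d z) = l k" if "k < 4" for k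
    using bary_unique[OF T _ _ that] by blast
  then show "bary v a (bary_chart v a b c d z) = z$1" "bary v b (bary_chart v a b c d z) = z$2"
    "bary v c (bary_chart v a b c d z) = z$3"
    "bary v d (bary_chart v a b c d z) = 1 - z$1 - z$2 - z$3"
    using abcd by (auto simp: l_def)
qed

lemma bary_chart_bary_coords:
  assumes T: "tetrahedron v" and abcd: "a < 4" "b < 4" "c < 4" "d < 4" "distinct [a, b, c, d]"
  shows "bary_chart v a b c d (bary_coords v a b c x) = x"
proof -
  have four: "{..<4::nat} = {a, b, c, d}"
    using lessThan_4_eq[OF abcd] .
  have "bary v d x = 1 - bary v a x - bary v b x - bary v c x"
    using sum_bary[OF T, of x] abcd(5) unfolding four by simp
  moreover have "x = bary v a x *\<^sub>R v a + bary v b x *\<^sub>R v b + bary v c x *\<^sub>R v c + bary v d x *\<^sub>R v d"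
    using bary_combination[OF T, of x] abcd(5) unfolding four by (simp add: algebra_simps)
  ultimately show ?thesis
    by (simp add: bary_chart_def)
qed

lemma poly3_divisible_by_bary:
  assumes T: "tetrahedron v" and a: "a < 4" and f: "poly3 r f"
    and vanish: "\<And>x. bary v a x = 0 \<Longrightarrow> (\<And>k. k < 4 \<Longrightarrow> k \<noteq> a \<Longrightarrow> 0 < bary v k x) \<Longrightarrow> f x = 0"
  obtains g where "poly3 (r - 1) g" "\<And>x. f x = bary v a x * g x"
proof -
  obtain b c d where abcd: "b < 4" "c < 4" "d < 4" "distinct [a, b, c, d]"
    using obtain_other_indices[OF a] by blast
  have four: "{..<4::nat} = {a, b, c, d}"
    using lessThan_4_eq[OF a abcd] .
  have "poly3 r (\<lambda>z. f (bary_chart v a b c d z))"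
    using f poly3_bary_chart by (rule poly3_compose_affine)
  then obtain A where A: "poly3 (r - 1) A" "\<And>z. f (bary_chart v a b c d z) = z$1 * A z"
  proof (rule poly3_divisible_by_coord1)
    fix z :: "real^3"
    assume z: "z$1 = 0" "0 < z$2" "0 < z$3" "z$2 + z$3 < 1"
    show "f (bary_chart v a b c d z) = 0"
    proof (rule vanish)
      show "bary v a (bary_chart v a b c d z) = 0"
        using bary_bary_chart[OF T a abcd] z(1) by simp
      fix k
      assume "k < 4" "k \<noteq> a"
      then have "k = b \<or> k = c \<or> k = d"
        using four by auto
      then show "0 < bary v k (bary_chart v a b c d z)"
        using bary_bary_chart[OF T a abcd] z by auto
    qed
  qed blast
  show thesis
  proof (rule that)
    show "poly3 (r - 1) (\<lambda>x. A (bary_coords v a b c x))"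
      using A(1) poly3_bary_coords[OF T] by (rule poly3_compose_affine)
    show "f x = bary v a x * A (bary_coords v a b c x)" for x
      using A(2)[of "bary_coords v a b c x"] bary_chart_bary_coords[OF T a abcd] by simp
  qed
qed

lemma poly3_divisible_by_bary_on_face:
  assumes T: "tetrahedron v" and ab: "a < 4" "b < 4" "a \<noteq> b" and f: "poly3 r f"
    and vanish: "\<And>x. bary v a x = 0 \<Longrightarrow> bary v b x = 0
      \<Longrightarrow> (\<And>k. k < 4 \<Longrightarrow> k \<noteq> a \<Longrightarrow> k \<noteq> b \<Longrightarrow> 0 < bary v k x) \<Longrightarrow> f x = 0"
  obtains g where "poly3 (r - 1) g" "\<And>x. bary v a x = 0 \<Longrightarrow> f x = bary v b x * g x"
proof -
  obtain c d where abcd: "c < 4" "d < 4" "distinct [b, a, c, d]"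
    using obtain_remaining_indices[OF ab(2,1) ab(3)[symmetric]] by blast
  have four: "{..<4::nat} = {b, a, c, d}"
    using lessThan_4_eq[OF ab(2,1) abcd] .
  let ?face_chart = "\<lambda>z. bary_chart v b a c d (zero_coord 2 z)"
  have "poly3 r (\<lambda>z. f (?face_chart z))"
    using f poly3_compose_affine[OF poly3_bary_chart poly3_zero_coord]
    by (rule poly3_compose_affine)
  then obtain A where A: "poly3 (r - 1) A" "\<And>z. f (?face_chart z) = z$1 * A z"
  proof (rule poly3_divisible_by_coord1)
    fix z :: "real^3"
    assume z: "z$1 = 0" "0 < z$2" "0 < z$3" "z$2 + z$3 < 1"
    show "f (?face_chart z) = 0"
    proof (rule vanish)
      show "bary v a (?face_chart z) = 0" "bary v b (?face_chart z) = 0"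
        using bary_bary_chart[OF T ab(2,1) abcd] z(1) by simp_all
      fix k
      assume "k < 4" "k \<noteq> a" "k \<noteq> b"
      then have "k = c \<or> k = d"
        using four by auto
      then show "0 < bary v k (?face_chart z)"
        using bary_bary_chart[OF T ab(2,1) abcd] z by auto
    qed
  qed blast
  show thesis
  proof (rule that)
    show "poly3 (r - 1) (\<lambda>x. A (bary_coords v b a c x))"
      using A(1) poly3_bary_coords[OF T] by (rule poly3_compose_affine)
    fix x
    assume "bary v a x = 0"
    then have "zero_coord 2 (bary_coords v b a c x) = bary_coords v b a c x"
      by (simp add: vec_eq_iff forall_3)
    then show "f x = bary v b x * A (bary_coords v b a c x)"
      using A(2)[of "bary_coords v b a c x"] bary_chart_bary_coords[OF T ab(2,1) abcd] by simp
  qed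
qed

lemma poly3_factor_prod_bary:
  assumes T: "tetrahedron v" and S: "S \<subseteq> {..<4}" and f: "poly3 r f"
    and vanish: "\<And>a x. a \<in> S \<Longrightarrow> bary v a x = 0
      \<Longrightarrow> (\<And>k. k < 4 \<Longrightarrow> k \<noteq> a \<Longrightarrow> 0 < bary v k x) \<Longrightarrow> f x = 0"
  shows "\<exists>g. poly3 (r - int (card S)) g \<and> (\<forall>x. f x = (\<Prod>a\<in>S. bary v a x) * g x)"
proof -
  have "finite S"
    using S finite_subset by blast
  then show ?thesis
    using S vanish
  proof (induction S rule: finite_induct)
    case empty
    then show ?case
      using f by auto
  next
    case (insert a S)
    then obtain g where g: "poly3 (r - int (card S)) g" "\<And>x. f x = (\<Prod>s\<in>S. bary v s x) * g x"
      by blast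
    obtain h where h: "poly3 (r - int (card S) - 1) h" "\<And>x. g x = bary v a x * h x"
    proof (rule poly3_divisible_by_bary[OF T _ g(1)])
      show "a < 4"
        using insert.prems(1) by auto
      fix x
      assume x: "bary v a x = 0" "\<And>k. k < 4 \<Longrightarrow> k \<noteq> a \<Longrightarrow> 0 < bary v k x"
      have "0 < bary v s x" if "s \<in> S" for s
        using that insert.hyps(2) insert.prems(1) x(2) by auto
      then have "(\<Prod>s\<in>S. bary v s x) \<noteq> 0"
        using prod_pos[of S "\<lambda>s. bary v s x"] by simp
      moreover have "f x = 0"
        using insert.prems(2)[of a x] x by auto
      ultimately show "g x = 0"
        using g(2)[of x] by simp
    qed blast
    have "poly3 (r - int (card (insert a S))) h"
      using h(1) insert.hyps by (simp add: algebra_simps)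
    moreover have "f x = (\<Prod>s\<in>insert a S. bary v s x) * h x" for x
      using g(2) h(2) insert.hyps by (simp add: mult_ac)
    ultimately show ?case
      by blast
  qed
qed

lemma poly3_factor_prod_bary_on_face:
  assumes T: "tetrahedron v" and i: "i < 4" and S: "S \<subseteq> {..<4} - {i}" and f: "poly3 r f"
    and vanish: "\<And>a x. a \<in> S \<Longrightarrow> bary v i x = 0 \<Longrightarrow> bary v a x = 0
      \<Longrightarrow> (\<And>k. k < 4 \<Longrightarrow> k \<noteq> i \<Longrightarrow> k \<noteq> a \<Longrightarrow> 0 < bary v k x) \<Longrightarrow> f x = 0"
  shows "\<exists>g. poly3 (r - int (card S)) g
    \<and> (\<forall>x. bary v i x = 0 \<longrightarrow> f x = (\<Prod>a\<in>S. bary v a x) * g x)"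
proof -
  have "finite S"
    using S finite_subset by blast
  then show ?thesis
    using S vanish
  proof (induction S rule: finite_induct)
    case empty
    then show ?case
      using f by auto
  next
    case (insert a S)
    then obtain g where g: "poly3 (r - int (card S)) g"
      "\<And>x. bary v i x = 0 \<Longrightarrow> f x = (\<Prod>s\<in>S. bary v s x) * g x"
      by blast
    have a: "a < 4" "i \<noteq> a"
      using insert.prems(1) by auto
    obtain h where h: "poly3 (r - int (card S) - 1) h"
      "\<And>x. bary v i x = 0 \<Longrightarrow> g x = bary v a x * h x"
    proof (rule poly3_divisible_by_bary_on_face[OF T i a(1) a(2) g(1)])
      fix x
      assume x: "bary v i x = 0" "bary v a x = 0"
        "\<And>k. k < 4 \<Longrightarrow> k \<noteq> i \<Longrightarrow> k \<noteq> a \<Longrightarrow> 0 < bary v k x"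
      have "0 < bary v s x" if "s \<in> S" for s
        using that insert.hyps(2) insert.prems(1) x(3) by auto
      then have "(\<Prod>s\<in>S. bary v s x) \<noteq> 0"
        using prod_pos[of S "\<lambda>s. bary v s x"] by simp
      moreover have "f x = 0"
        using insert.prems(2)[of a x] x by auto
      ultimately show "g x = 0"
        using g(2)[of x] x(1) by simp
    qed blast
    have "poly3 (r - int (card (insert a S))) h"
      using h(1) insert.hyps by (simp add: algebra_simps)
    moreover have "bary v i x = 0 \<longrightarrow> f x = (\<Prod>s\<in>insert a S. bary v s x) * h x" for x
      using g(2) h(2) insert.hyps by (simp add: mult_ac)
    ultimately show ?case
      by blast
  qed
qed

lemma P_ring_Lambda1_normal_on_face:
  assumes "tetrahedron v" "E \<in> P_ring_Lambda1 v p" "i < 4" "x \<in> face v i"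
  shows "E x = (E x \<bullet> face_normal v i) *\<^sub>R face_normal v i"
  using assms norm_face_normal[OF assms(1,3)]
  by (intro parallel_unit_if_cross3_eq_0) (auto simp: P_ring_Lambda1_def)

lemma tangential_field_eq_0_on_edge:
  assumes T: "tetrahedron v" and E: "E \<in> P_ring_Lambda1 v p"
    and ij: "i < 4" "j < 4" "i \<noteq> j" and x: "x \<in> face v i" "x \<in> face v j"
  shows "E x = 0"
proof -
  let ?n = "face_normal v"
  note parallel = P_ring_Lambda1_normal_on_face[OF T E]
  obtain l m where "l < 4" "m < 4" "distinct [i, j, l, m]"
    using obtain_remaining_indices[OF ij] by blast
  then have "?n j \<bullet> (v i - v l) = 0" "?n i \<bullet> (v i - v l) \<noteq> 0"
    using ij face_normal_orthogonal[OF T ij(2), of i l] face_normal_vertex_edge_neq_0[OF T ij(1), of l]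
    by auto
  moreover have "(E x \<bullet> ?n i) * (?n i \<bullet> (v i - v l)) = (E x \<bullet> ?n j) * (?n j \<bullet> (v i - v l))"
    using parallel[OF ij(1) x(1)] parallel[OF ij(2) x(2)] by (metis inner_scaleR_left)
  ultimately have "E x \<bullet> ?n i = 0"
    by simp
  then show ?thesis
    using parallel[OF ij(1) x(1)] by simp
qed

definition face_bubble :: "(nat \<Rightarrow> real^3) \<Rightarrow> nat \<Rightarrow> real^3 \<Rightarrow> real" where
  "face_bubble v i x = (\<Prod>k\<in>{..<4} - {i}. bary v k x)"

definition normal_bubble_field ::
    "(nat \<Rightarrow> real^3) \<Rightarrow> (nat \<Rightarrow> real^3 \<Rightarrow> real) \<Rightarrow> real^3 \<Rightarrow> real^3" where
  "normal_bubble_field v q x = (\<Sum>i<4. (q i x * face_bubble v i x) *\<^sub>R face_normal v i)"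

lemma Sigma_c_eq: "Sigma_c v p = {normal_bubble_field v q | q. \<forall>i<4. poly3 (int p - 3) (q i)}"
  by (auto simp: Sigma_c_def normal_bubble_field_def[abs_def] face_bubble_def)

lemma poly3_face_bubble: "tetrahedron v \<Longrightarrow> i < 4 \<Longrightarrow> poly3 3 (face_bubble v i)"
  using poly3_prod[of "{..<4} - {i}" "bary v"] unfolding face_bubble_def[abs_def]
  by (simp add: poly3_bary)

lemma bary_mult_face_bubble: "i < 4 \<Longrightarrow> bary v i x * face_bubble v i x = (\<Prod>k<4. bary v k x)"
  by (simp add: face_bubble_def prod.remove[of "{..<4}" i])

lemma normal_trace_factor:
  assumes T: "tetrahedron v" and E: "E \<in> P_ring_Lambda1 v p" and i: "i < 4"
  shows "\<exists>q. poly3 (int p - 3) q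
    \<and> (\<forall>x. bary v i x = 0 \<longrightarrow> E x \<bullet> face_normal v i = face_bubble v i x * q x)"
proof -
  have "card ({..<4::nat} - {i}) = 3"
    using i by simp
  moreover have "\<exists>g. poly3 (int p - int (card ({..<4} - {i}))) g
      \<and> (\<forall>x. bary v i x = 0 \<longrightarrow> E x \<bullet> face_normal v i = (\<Prod>a\<in>{..<4} - {i}. bary v a x) * g x)"
  proof (rule poly3_factor_prod_bary_on_face[OF T i subset_refl])
    show "poly3 (int p) (\<lambda>x. E x \<bullet> face_normal v i)"
      using E by (simp add: P_ring_Lambda1_def poly3_inner)
    fix a x
    assume a: "a \<in> {..<4} - {i}" and x: "bary v i x = 0" "bary v a x = 0"
      "\<And>k. k < 4 \<Longrightarrow> k \<noteq> i \<Longrightarrow> k \<noteq> a \<Longrightarrow> 0 < bary v k x"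
    have nonneg: "0 \<le> bary v k x" if "k < 4" for k
      using x that by (cases "k = i \<or> k = a") (auto intro: less_imp_le)
    have "x \<in> face v i" "x \<in> face v a"
      using a in_face_if_bary[OF T i x(1) nonneg] in_face_if_bary[OF T _ x(2) nonneg] by auto
    then show "E x \<bullet> face_normal v i = 0"
      using tangential_field_eq_0_on_edge[OF T E i, of a x] a by auto
  qed
  ultimately show ?thesis
    by (simp add: face_bubble_def)
qed

lemma normal_bubble_field_on_face:
  assumes "i < 4" "bary v i x = 0"
  shows "normal_bubble_field v q x = (q i x * face_bubble v i x) *\<^sub>R face_normal v i"
proof -
  have "face_bubble v j x = 0" if "j < 4" "j \<noteq> i" for j
    using assms that by (auto simp: face_bubble_def)
  then show ?thesis
    using assms(1) by (simp add: normal_bubble_field_def sum.remove[of "{..<4}" i])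
qed

lemma vpoly3_normal_bubble_field:
  assumes T: "tetrahedron v" and q: "\<forall>i<4. poly3 (int p - 3) (q i)"
  shows "vpoly3 (int p) (normal_bubble_field v q)"
  unfolding vpoly3_def
proof
  fix k
  have "poly3 (int p - 3 + 3) (\<lambda>x. q i x * face_bubble v i x)" if "i < 4" for i
    using q that poly3_face_bubble[OF T that] by (intro poly3_mult) auto
  then have "poly3 (int p) (\<lambda>x. \<Sum>i<4. face_normal v i $ k * (q i x * face_bubble v i x))"
    by (intro poly3_sum poly3_cmult) auto
  then show "poly3 (int p) (\<lambda>x. normal_bubble_field v q x $ k)"
    by (simp add: normal_bubble_field_def mult.commute)
qed

lemma Sigma_c_subset_P_ring_Lambda1:
  assumes "tetrahedron v"
  shows "Sigma_c v p \<subseteq> P_ring_Lambda1 v p"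
proof
  fix E
  assume "E \<in> Sigma_c v p"
  then obtain q where q: "\<forall>i<4. poly3 (int p - 3) (q i)" and E: "E = normal_bubble_field v q"
    by (auto simp: Sigma_c_eq)
  have "cross3 (E x) (face_normal v i) = 0" if "i < 4" "x \<in> face v i" for i x
    using normal_bubble_field_on_face[OF that(1) bary_eq_0_on_face[OF assms that]]
    by (simp add: E cross_mult_left)
  then show "E \<in> P_ring_Lambda1 v p"
    using vpoly3_normal_bubble_field[OF assms q] by (simp add: P_ring_Lambda1_def E)
qed

lemma vpoly3_factor_prod_bary:
  assumes T: "tetrahedron v" and E: "vpoly3 r E"
    and vanish: "\<And>i x. i < 4 \<Longrightarrow> x \<in> face v i \<Longrightarrow> E x = 0"
  obtains G where "vpoly3 (r - 4) G" "\<And>x. E x = (\<Prod>k<4. bary v k x) *\<^sub>R G x"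
proof -
  have "\<exists>g. poly3 (r - int (card {..<4::nat})) g \<and> (\<forall>x. E x $ j = (\<Prod>k<4. bary v k x) * g x)" for j
  proof (rule poly3_factor_prod_bary[OF T subset_refl])
    show "poly3 r (\<lambda>x. E x $ j)"
      using E by (simp add: vpoly3_def)
    fix a x
    assume a: "a \<in> {..<4}" "bary v a x = 0" "\<And>k. k < 4 \<Longrightarrow> k \<noteq> a \<Longrightarrow> 0 < bary v k x"
    have "0 \<le> bary v k x" if "k < 4" for k
      using a that by (cases "k = a") (auto intro: less_imp_le)
    then have "x \<in> face v a"
      using a by (intro in_face_if_bary[OF T]) auto
    then show "E x $ j = 0"
      using vanish \<open>a \<in> {..<4}\<close> by simp
  qed
  then obtain g where g: "\<And>j. poly3 (r - 4) (g j)" "\<And>j x. E x $ j = (\<Prod>k<4. bary v k x) * g j x"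
    by (simp add: all_conj_distrib) metis
  show thesis
  proof (rule that)
    show "vpoly3 (r - 4) (\<lambda>x. \<chi> j. g j x)"
      using g(1) by (simp add: vpoly3_def)
    show "E x = (\<Prod>k<4. bary v k x) *\<^sub>R (\<chi> j. g j x)" for x
      by (simp add: vec_eq_iff g(2))
  qed
qed

lemma face_normal_coordinates:
  assumes T: "tetrahedron v" and G: "vpoly3 s G"
  obtains r where "\<And>k. poly3 s (r k)" "\<And>x. G x = (\<Sum>k\<in>{1, 2, 3}. r k x *\<^sub>R face_normal v k)"
proof -
  let ?n = "face_normal v"
  define N where "N = ?n 1 \<bullet> cross3 (?n 2) (?n 3)"
  define W where "W k = (if k = 1 then cross3 (?n 2) (?n 3)
      else if k = 2 then cross3 (?n 3) (?n 1) else cross3 (?n 1) (?n 2))" for k :: nat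
  have N: "N \<noteq> 0"
    unfolding N_def by (rule face_normals_independent[OF T])
  show thesis
  proof (rule that)
    show "poly3 s (\<lambda>x. (G x \<bullet> W k) / N)" for k
      using poly3_cmult[OF poly3_inner[OF G], of "1 / N"] by simp
    show "G x = (\<Sum>k\<in>{1, 2, 3}. ((G x \<bullet> W k) / N) *\<^sub>R ?n k)" for x
    proof -
      have cramer: "N *\<^sub>R G x = (\<Sum>k\<in>{1, 2, 3}. (G x \<bullet> W k) *\<^sub>R ?n k)"
        using cross3_cramer[of "?n 1" "?n 2" "?n 3" "G x"] by (simp add: N_def W_def)
      have "G x = (1 / N) *\<^sub>R (N *\<^sub>R G x)"
        using N by simp
      also have "\<dots> = (\<Sum>k\<in>{1, 2, 3}. ((G x \<bullet> W k) / N) *\<^sub>R ?n k)"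
        unfolding cramer by (simp add: scaleR_add_right)
      finally show ?thesis .
    qed
  qed
qed

lemma normal_bubble_field_add:
  "normal_bubble_field v (\<lambda>i x. q i x + q' i x) x = normal_bubble_field v q x + normal_bubble_field v q' x"
  by (simp add: normal_bubble_field_def distrib_right scaleR_add_left sum.distrib)

lemma normal_bubble_field_interior:
  "normal_bubble_field v (\<lambda>i x. if i \<in> {1, 2, 3} then bary v i x * r i x else 0) x
    = (\<Prod>k<4. bary v k x) *\<^sub>R (\<Sum>k\<in>{1, 2, 3}. r k x *\<^sub>R face_normal v k)"
proof -
  let ?P = "\<Prod>k<4. bary v k x"
  have "(bary v i x * r i x) * face_bubble v i x = ?P * r i x" if "i < 4" for i
    by (simp add: bary_mult_face_bubble[OF that, symmetric] mult_ac)
  then have "normal_bubble_field v (\<lambda>i x. if i \<in> {1, 2, 3} then bary v i x * r i x else 0) x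
      = (\<Sum>i<4. if i \<in> {1, 2, 3} then (?P * r i x) *\<^sub>R face_normal v i else 0)"
    unfolding normal_bubble_field_def by (intro sum.cong) auto
  also have "\<dots> = (\<Sum>i\<in>{1, 2, 3}. (?P * r i x) *\<^sub>R face_normal v i)"
    by (simp add: sum_lessThan_4)
  also have "\<dots> = ?P *\<^sub>R (\<Sum>k\<in>{1, 2, 3}. r k x *\<^sub>R face_normal v k)"
    by (simp add: scaleR_add_right)
  finally show ?thesis .
qed

lemma P_ring_Lambda1_subset_Sigma_c:
  assumes T: "tetrahedron v"
  shows "P_ring_Lambda1 v p \<subseteq> Sigma_c v p"
proof
  fix E
  assume E: "E \<in> P_ring_Lambda1 v p"
  obtain Q where Q: "\<And>i. i < 4 \<Longrightarrow> poly3 (int p - 3) (Q i)"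
    "\<And>i x. i < 4 \<Longrightarrow> bary v i x = 0 \<Longrightarrow> E x \<bullet> face_normal v i = face_bubble v i x * Q i x"
    using normal_trace_factor[OF T E] by metis
  define R where "R x = E x - normal_bubble_field v Q x" for x
  have "vpoly3 (int p) R"
    using E vpoly3_normal_bubble_field[OF T, of p Q] Q(1)
    by (auto simp: R_def vpoly3_def P_ring_Lambda1_def intro: poly3_diff)
  moreover have "R x = 0" if "i < 4" "x \<in> face v i" for i x
  proof -
    have "bary v i x = 0"
      using bary_eq_0_on_face[OF T that] .
    moreover have "E x = (E x \<bullet> face_normal v i) *\<^sub>R face_normal v i"
      using P_ring_Lambda1_normal_on_face[OF T E that] .
    ultimately show ?thesis
      using Q(2) that(1) normal_bubble_field_on_face by (simp add: R_def mult.commute)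
  qed
  ultimately obtain G where G: "vpoly3 (int p - 4) G" "\<And>x. R x = (\<Prod>k<4. bary v k x) *\<^sub>R G x"
    using vpoly3_factor_prod_bary[OF T] by blast
  obtain r where r: "\<And>k. poly3 (int p - 4) (r k)"
    "\<And>x. G x = (\<Sum>k\<in>{1, 2, 3}. r k x *\<^sub>R face_normal v k)"
    using face_normal_coordinates[OF T G(1)] by blast
  \<comment> \<open>\<open>\<lambda>\<^sub>0\<lambda>\<^sub>1\<lambda>\<^sub>2\<lambda>\<^sub>3 r\<^sub>k \<nu>\<^sub>k = (\<lambda>\<^sub>k r\<^sub>k) \<lambda>\<^sub>j\<lambda>\<^sub>l\<lambda>\<^sub>m \<nu>\<^sub>k\<close>, so the remainder is absorbed into \<open>Q\<close>\<close>
  define q where "q i x = Q i x + (if i \<in> {1, 2, 3} then bary v i x * r i x else 0)" for i x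
  have "poly3 (int p - 3) (q i)" if "i < 4" for i
  proof -
    have "poly3 (1 + (int p - 4)) (\<lambda>x. bary v i x * r i x)"
      by (rule poly3_mult[OF poly3_bary[OF T] r(1)])
    then have "poly3 (int p - 3) (\<lambda>x. if i \<in> {1, 2, 3} then bary v i x * r i x else 0)"
      by (cases "i \<in> {1, 2, 3}") (simp_all add: poly3_zero)
    then show ?thesis
      unfolding q_def by (rule poly3_add[OF Q(1)[OF that]])
  qed
  moreover have "E = normal_bubble_field v q"
    unfolding q_def normal_bubble_field_add normal_bubble_field_interior
    using R_def G(2) r(2) by (simp add: fun_eq_iff)
  ultimately show "E \<in> Sigma_c v p"
    by (auto simp: Sigma_c_eq)
qed

theorem mainTheorem6:
  fixes v :: "nat \<Rightarrow> real^3" and p :: nat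
  assumes "tetrahedron v"
  shows "Sigma_c v p = P_ring_Lambda1 v p"
  using Sigma_c_subset_P_ring_Lambda1[OF assms] P_ring_Lambda1_subset_Sigma_c[OF assms]
  by (rule subset_antisym)

end
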